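(* For every integer $n\ge 1$ there exists an equiangular set of at least $\frac{8}{1089}\,n(4n+33)$ lines in $\mathbb{R}^n$.
   Context: A set of lines in $\mathbb{R}^n$ spanned by unit vectors $v_1,\dots,v_r$ is equiangular if there is a constant $c$ such that $|\langle v_i,v_j\rangle|=c$ for all $1\le i<j\le r$. *)

theory Defs
  imports "HOL-Analysis.Analysis"
begin

definition equiangular_lines :: "(nat \<Rightarrow> 'a::real_inner) \<Rightarrow> nat \<Rightarrow> bool" where
  "equiangular_lines v r \<longleftrightarrow>
     (\<forall>i<r. norm (v i) = 1) \<and>
     (\<forall>i<r. \<forall>j<r. i \<noteq> j \<longrightarrow> span {v i} \<noteq> span {v j}) \<and>
     (\<exists>c. \<forall>i<r. \<forall>j<r. i < j \<longrightarrow> \<bar>v i \<bullet> v j\<bar> = c)"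

end

theory Submission
  imports Defs "HOL-Library.Z2" "HOL-Algebra.Algebraic_Closure_Type"
begin

text \<open>
  For odd \<open>m = 2k + 1\<close>, the Kerdock quadratic forms on \<open>KV m = GF(2\<^sup>m) \<times> GF(2)\<close> yield
  \<open>2\<^sup>m + 1\<close> mutually unbiased bases of \<open>\<real>\<^sup>d\<close>, \<open>d = 2^(m+1) = 4^(k+1)\<close>: the standard basis
  and, for each \<open>s \<in> GF(2\<^sup>m)\<close>, the \<open>\<pm>1\<close> vectors \<open>(-1)^(Q\<^sub>s + \<lambda>)\<close>, \<open>\<lambda>\<close> ranging over the linear
  functionals. Unbiasedness is a Gauss sum computation: the sum of two distinct Kerdock forms
  has nondegenerate polar form.
  Appending \<open>g\<close> extra coordinates that mark the basis of each vector turns \<open>g\<close> of these bases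
  into \<open>g d\<close> equiangular lines in \<open>\<real>^(d+g)\<close>. Choosing \<open>k\<close> and \<open>g\<close> well for a given dimension
  (or just taking the coordinate axes in small dimension) gives the theorem.
\<close>

section \<open>Arithmetic in characteristic two\<close>

text \<open>All finite fields of characteristic two live inside the algebraic closure of \<open>GF(2)\<close>.\<close>
type_synonym K = "bit alg_closure"

lemma K_char_two [simp]: "(2::K) = 0"
proof -
  have "(2::K) = to_ac (2::bit)" by (simp only: to_ac_numeral)
  also have "\<dots> = 0" by simp
  finally show ?thesis .
qed

lemma K_add_self [simp]: "(x::K) + x = 0"
  by (metis K_char_two mult_2 mult_zero_left)

lemma K_add_eq_0_iff: "(x::K) + y = 0 \<longleftrightarrow> x = y"
  by (metis K_add_self add_eq_0_iff2 add_right_cancel)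

lemma K_of_nat: "(of_nat n :: K) = (if even n then 0 else 1)"
  by (induction n) (auto simp: K_add_eq_0_iff)

lemma frobenius_add: "((x::K) + y) ^ (2^k) = x ^ (2^k) + y ^ (2^k)"
proof (induction k)
  case (Suc k)
  have "(x + y) ^ (2 ^ Suc k) = ((x + y) ^ (2^k))\<^sup>2"
    by (simp add: power_mult[symmetric] mult.commute)
  also have "\<dots> = (x ^ (2^k))\<^sup>2 + (y ^ (2^k))\<^sup>2" by (simp add: Suc power2_sum)
  also have "\<dots> = x ^ (2 ^ Suc k) + y ^ (2 ^ Suc k)"
    by (simp add: power_mult[symmetric] mult.commute)
  finally show ?case .
qed simp

lemma frobenius_sum: "(sum f A :: K) ^ (2^k) = (\<Sum>i\<in>A. f i ^ (2^k))"
  by (induction A rule: infinite_finite_induct) (auto simp: frobenius_add)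

definition in_F2 :: "K \<Rightarrow> bool" where "in_F2 t \<longleftrightarrow> t = 0 \<or> t = 1"

lemma in_F2_0 [simp]: "in_F2 0" and in_F2_1 [simp]: "in_F2 1"
  by (auto simp: in_F2_def)

lemma in_F2_add [simp]: "in_F2 a \<Longrightarrow> in_F2 b \<Longrightarrow> in_F2 (a + b)"
  and in_F2_mult [simp]: "in_F2 a \<Longrightarrow> in_F2 b \<Longrightarrow> in_F2 (a * b)"
  by (auto simp: in_F2_def)

lemma in_F2_if_idempotent: "(t::K)\<^sup>2 = t \<Longrightarrow> in_F2 t"
  by (metis in_F2_def power2_eq_square mult_cancel_left1 mult.commute)


lemma card_roots_separable:
  fixes p :: "'a::alg_closed_field poly"
  assumes "p \<noteq> 0" and "\<And>a. poly p a = 0 \<Longrightarrow> poly (pderiv p) a \<noteq> 0"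
  shows "card {x. poly p x = 0} = Polynomial.degree p"
  using assms
proof (induction "Polynomial.degree p" arbitrary: p rule: less_induct)
  case (less p)
  show ?case
  proof (cases "Polynomial.degree p = 0")
    case True
    then obtain c where "p = [:c:]" by (meson degree_eq_zeroE)
    with less.prems True show ?thesis by auto
  next
    case False
    then obtain a where a: "poly p a = 0" using alg_closed_imp_poly_has_root by blast
    then obtain q where q: "p = [:-a, 1:] * q" using poly_eq_0_iff_dvd by blast
    have q0: "q \<noteq> 0" using q less.prems by auto
    have deg: "Polynomial.degree p = Suc (Polynomial.degree q)"
      unfolding q using q0 by (subst degree_mult_eq) auto
    have "pderiv p = [:-a, 1:] * pderiv q + q * pderiv [:-a, 1:]"
      unfolding q by (rule pderiv_mult)
    hence pd: "pderiv p = q + [:-a, 1:] * pderiv q"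
      by (simp add: pderiv_pCons add.commute)
    have qa: "poly q a \<noteq> 0" using less.prems(2)[OF a] pd by simp
    have "poly (pderiv q) b \<noteq> 0" if "poly q b = 0" for b
      using less.prems(2)[of b] that q pd by auto
    hence IH: "card {x. poly q x = 0} = Polynomial.degree q" using less.hyps[of q] deg q0 by auto
    have "{x. poly p x = 0} = insert a {x. poly q x = 0}" using a q by auto
    moreover have "finite {x. poly q x = 0}" using q0 poly_roots_finite by blast
    ultimately show ?thesis using IH qa deg by simp
  qed
qed


section \<open>The finite fields \<open>GF(2\<^sup>m)\<close>\<close>

definition GF :: "nat \<Rightarrow> K set" where "GF m = {x. x ^ (2^m) = x}"

lemma GF_pow: "x \<in> GF m \<Longrightarrow> x ^ (2^m) = x" by (simp add: GF_def)
lemma GF_0 [simp]: "0 \<in> GF m" and GF_1 [simp]: "1 \<in> GF m" by (simp_all add: GF_def)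
lemma GF_add [simp]: "x \<in> GF m \<Longrightarrow> y \<in> GF m \<Longrightarrow> x + y \<in> GF m"
  by (simp add: GF_def frobenius_add)
lemma GF_mult [simp]: "x \<in> GF m \<Longrightarrow> y \<in> GF m \<Longrightarrow> x * y \<in> GF m"
  by (simp add: GF_def power_mult_distrib)
lemma GF_divide [simp]: "x \<in> GF m \<Longrightarrow> y \<in> GF m \<Longrightarrow> x / y \<in> GF m"
  by (simp add: GF_def power_divide)
lemma GF_if_in_F2: "in_F2 a \<Longrightarrow> a \<in> GF m" by (auto simp: in_F2_def)

text \<open>\<open>GF m\<close> is the root set of the polynomial \<open>X ^ (2^m) + X\<close>, whose derivative is \<open>1\<close>.\<close>
lemma card_GF: assumes "m \<ge> 1" shows "card (GF m) = 2^m"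
proof -
  define p :: "K poly" where "p = Polynomial.monom 1 (2^m) + [:0, 1:]"
  have two_le: "(2::nat) \<le> 2^m" using assms by (simp add: self_le_power)
  have deg: "Polynomial.degree p = 2^m"
    unfolding p_def using two_le by (subst degree_add_eq_left) (auto simp: degree_monom_eq)
  have "pderiv p = 1"
    using assms by (simp add: p_def pderiv_add pderiv_monom pderiv_pCons power_0_left)
  hence "card {x. poly p x = 0} = 2^m"
    using card_roots_separable[of p] deg two_le by fastforce
  moreover have "{x. poly p x = 0} = GF m"
    by (auto simp: p_def poly_monom GF_def K_add_eq_0_iff)
  ultimately show ?thesis by simp
qed

lemma finite_GF: "m \<ge> 1 \<Longrightarrow> finite (GF m)"
  using card_GF by (metis card.infinite power_not_zero zero_neq_numeral)

text \<open>For \<open>x \<in> GF m\<close> the conjugates are \<open>x^(2^i)\<close>, \<open>i < m\<close>; \<open>tr m x\<close> is their sum (the absolute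
  trace) and \<open>e2 m x\<close> their second elementary symmetric function. Both lie in \<open>GF(2)\<close>
  because the Frobenius permutes the conjugates cyclically.\<close>
definition tr :: "nat \<Rightarrow> K \<Rightarrow> K" where "tr m x = (\<Sum>i<m. x ^ (2^i))"

definition e2 :: "nat \<Rightarrow> K \<Rightarrow> K" where "e2 m x = (\<Sum>j<m. \<Sum>i<j. x ^ (2^i) * x ^ (2^j))"

lemma tr_add: "tr m (x + y) = tr m x + tr m y"
  by (simp add: tr_def frobenius_add sum.distrib)

lemma tr_0 [simp]: "tr m 0 = 0" and e2_0 [simp]: "e2 m 0 = 0"
  by (simp_all add: tr_def e2_def power_0_left)

lemma tr_F2_scalar: "in_F2 c \<Longrightarrow> tr m (c * x) = c * tr m x"
  by (auto simp: in_F2_def)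

lemma tr_F2: "in_F2 c \<Longrightarrow> odd m \<Longrightarrow> tr m c = c"
  by (auto simp: in_F2_def tr_def K_of_nat power_0_left)

lemma sum_shift_cyclic:
  fixes a :: "nat \<Rightarrow> 'a::cancel_comm_monoid_add"
  assumes "a m = a 0"
  shows "(\<Sum>i<m. a (Suc i)) = (\<Sum>i<m. a i)"
proof -
  have "a 0 + (\<Sum>i<m. a (Suc i)) = (\<Sum>i<Suc m. a i)" by (rule sum.lessThan_Suc_shift[symmetric])
  also have "\<dots> = a 0 + (\<Sum>i<m. a i)" using assms by (simp add: add.commute)
  finally show ?thesis by simp
qed

lemma sum_pairs_shift_cyclic:
  fixes a :: "nat \<Rightarrow> 'a::comm_ring"
  assumes "a m = a 0"
  shows "(\<Sum>j<m. \<Sum>i<j. a (Suc i) * a (Suc j)) = (\<Sum>j<m. \<Sum>i<j. a i * a j)"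
proof -
  define P where "P k = (\<Sum>j<k. \<Sum>i<j. a i * a j)" for k
  have row: "(\<Sum>i<j. a (Suc i) * a (Suc j)) = (\<Sum>i<Suc j. a i * a (Suc j)) - a 0 * a (Suc j)" for j
    using sum.lessThan_Suc_shift[of "\<lambda>i. a i * a (Suc j)" j] by simp
  have "(\<Sum>j<m. \<Sum>i<j. a (Suc i) * a (Suc j))
          = (\<Sum>j<m. \<Sum>i<Suc j. a i * a (Suc j)) - a 0 * (\<Sum>j<m. a (Suc j))"
    by (simp only: row sum_subtractf sum_distrib_left)
  also have "(\<Sum>j<m. \<Sum>i<Suc j. a i * a (Suc j)) = P (Suc m)"
    unfolding P_def by (subst sum.lessThan_Suc_shift) simp
  also have "P (Suc m) = P m + a 0 * (\<Sum>i<m. a i)"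
    by (simp add: P_def assms sum_distrib_left sum_distrib_right mult.commute)
  also have "(\<Sum>j<m. a (Suc j)) = (\<Sum>i<m. a i)" by (rule sum_shift_cyclic[OF assms])
  finally show ?thesis by (simp add: P_def)
qed

lemma tr_in_F2 [simp]:
  assumes "x \<in> GF m" shows "in_F2 (tr m x)"
proof -
  have "(tr m x)\<^sup>2 = (\<Sum>i<m. x ^ (2 ^ Suc i))"
    using frobenius_sum[of "\<lambda>i. x ^ (2^i)" "{..<m}" 1]
    by (simp add: tr_def power_mult[symmetric] mult.commute)
  also have "\<dots> = tr m x"
    unfolding tr_def by (rule sum_shift_cyclic[where a="\<lambda>i. x ^ (2^i)"]) (simp add: GF_pow[OF assms])
  finally show ?thesis by (rule in_F2_if_idempotent)
qed

lemma e2_in_F2 [simp]: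
  assumes "x \<in> GF m" shows "in_F2 (e2 m x)"
proof -
  define a where "a i = x ^ (2^i)" for i
  have "(e2 m x) ^ (2^1) = (\<Sum>j<m. \<Sum>i<j. (a i * a j) ^ (2^1))"
    unfolding e2_def a_def by (simp only: frobenius_sum)
  also have "\<dots> = (\<Sum>j<m. \<Sum>i<j. a (Suc i) * a (Suc j))"
    by (simp add: a_def power_mult_distrib power_mult[symmetric] mult.commute)
  also have "\<dots> = e2 m x"
    unfolding e2_def a_def by (rule sum_pairs_shift_cyclic) (simp add: GF_pow[OF assms])
  finally show ?thesis by (intro in_F2_if_idempotent) simp
qed

text \<open>The trace is not identically zero on \<open>GF m\<close>: as a polynomial function it has degree
  \<open>2^(m-1) < card (GF m)\<close>.\<close>
lemma tr_surjective:
  assumes "m \<ge> 1" shows "\<exists>y\<in>GF m. tr m y = 1"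
proof (rule ccontr)
  assume no_one: "\<not> ?thesis"
  define T :: "K poly" where "T = (\<Sum>i<m. Polynomial.monom 1 (2^i))"
  have eval: "poly T x = tr m x" for x by (simp add: T_def tr_def poly_sum poly_monom)
  have "Polynomial.coeff T (2^(m-1)) = (\<Sum>i<m. if 2^i = (2::nat)^(m-1) then 1 else 0)"
    by (simp add: T_def coeff_sum coeff_monom)
  also have "\<dots> = (\<Sum>i\<in>{m-1}. 1)"
    by (rule sum.mono_neutral_cong_right) (use assms in auto)
  finally have T0: "T \<noteq> 0" by auto
  have deg: "Polynomial.degree T \<le> 2^(m-1)" unfolding T_def
    by (rule degree_sum_le) (auto intro: order.trans[OF degree_monom_le])
  have "GF m \<subseteq> {x. poly T x = 0}"
    using no_one tr_in_F2 by (auto simp: eval in_F2_def)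
  hence "card (GF m) \<le> card {x. poly T x = 0}"
    using poly_roots_finite[OF T0] by (rule card_mono[rotated])
  also have "\<dots> \<le> 2^(m-1)" using card_poly_roots_bound[OF T0] deg by linarith
  also have "\<dots> < 2^m" using assms by simp
  finally show False using card_GF[OF assms] by simp
qed

lemma tr_nondegenerate:
  assumes "m \<ge> 1" "w \<in> GF m" "w \<noteq> 0" shows "\<exists>y\<in>GF m. tr m (w * y) = 1"
proof -
  obtain y where "y \<in> GF m" "tr m y = 1" using tr_surjective[OF assms(1)] by blast
  thus ?thesis using assms by (intro bexI[of _ "y / w"]) auto
qed

lemma sum_square_split:
  fixes g :: "nat \<Rightarrow> nat \<Rightarrow> 'a::comm_monoid_add"
  shows "(\<Sum>i<m. \<Sum>j<m. g i j)
           = (\<Sum>j<m. \<Sum>i<j. g i j) + (\<Sum>i<m. g i i) + (\<Sum>i<m. \<Sum>j<i. g i j)"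
proof (induction m)
  case (Suc m)
  have "(\<Sum>i<Suc m. \<Sum>j<Suc m. g i j)
          = (\<Sum>i<m. \<Sum>j<m. g i j) + (\<Sum>i<m. g i m) + (\<Sum>j<m. g m j) + g m m"
    by (simp add: sum.distrib algebra_simps)
  also have "\<dots> = (\<Sum>j<Suc m. \<Sum>i<j. g i j) + (\<Sum>i<Suc m. g i i) + (\<Sum>i<Suc m. \<Sum>j<i. g i j)"
    using Suc by (simp add: algebra_simps)
  finally show ?case .
qed simp

lemma e2_add: "e2 m (x + y) = e2 m x + e2 m y + tr m x * tr m y + tr m (x * y)"
proof -
  define a where "a i = x ^ (2^i)" for i
  define b where "b i = y ^ (2^i)" for i
  have "e2 m (x + y) = (\<Sum>j<m. \<Sum>i<j. (a i + b i) * (a j + b j))"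
    by (simp add: e2_def a_def b_def frobenius_add)
  also have "\<dots> = e2 m x + e2 m y + ((\<Sum>j<m. \<Sum>i<j. a i * b j) + (\<Sum>j<m. \<Sum>i<j. b i * a j))"
    by (simp add: e2_def a_def b_def algebra_simps sum.distrib)
  also have "(\<Sum>j<m. \<Sum>i<j. b i * a j) = (\<Sum>i<m. \<Sum>j<i. a i * b j)" by (simp add: mult.commute)
  also have "(\<Sum>j<m. \<Sum>i<j. a i * b j) + (\<Sum>i<m. \<Sum>j<i. a i * b j)
               = tr m x * tr m y + tr m (x * y)"
    using sum_square_split[of "\<lambda>i j. a i * b j" m]
    by (simp add: tr_def a_def b_def sum_product power_mult_distrib algebra_simps)
  finally show ?thesis by (simp add: algebra_simps)
qed

section \<open>Character sums over elementary abelian \<open>2\<close>-groups\<close>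

definition chi :: "K \<Rightarrow> real" where "chi t = (if t = 0 then 1 else -1)"

lemma chi_add: "in_F2 a \<Longrightarrow> in_F2 b \<Longrightarrow> chi (a + b) = chi a * chi b"
  by (auto simp: in_F2_def chi_def)

lemma chi_0 [simp]: "chi 0 = 1" and chi_1 [simp]: "chi 1 = -1" and chi_abs [simp]: "\<bar>chi a\<bar> = 1"
  and chi_square [simp]: "chi a * chi a = 1"
  by (simp_all add: chi_def)

lemma sum_translate:
  fixes V :: "'v::ab_group_add set"
  assumes add_V: "\<And>v w. v \<in> V \<Longrightarrow> w \<in> V \<Longrightarrow> v + w \<in> V"
    and two_V: "\<And>v. v \<in> V \<Longrightarrow> v + v = 0" and "u \<in> V"
  shows "(\<Sum>v\<in>V. f (u + v)) = (\<Sum>v\<in>V. f v)"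
proof -
  have "u + (u + v) = v" for v by (simp add: add.assoc[symmetric] two_V[OF \<open>u \<in> V\<close>])
  thus ?thesis
    by (intro sum.reindex_bij_witness[where i="(+) u" and j="(+) u"]) (auto intro: add_V \<open>u \<in> V\<close>)
qed

lemma chi_sum_linear:
  fixes V :: "'v::ab_group_add set"
  assumes add_V: "\<And>v w. v \<in> V \<Longrightarrow> w \<in> V \<Longrightarrow> v + w \<in> V"
    and two_V: "\<And>v. v \<in> V \<Longrightarrow> v + v = 0"
    and lin: "\<And>v w. v \<in> V \<Longrightarrow> w \<in> V \<Longrightarrow> l (v + w) = l v + l w"
    and F2: "\<And>v. v \<in> V \<Longrightarrow> in_F2 (l v)"
    and u: "u \<in> V" "l u = 1"
  shows "(\<Sum>v\<in>V. chi (l v)) = 0"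
proof -
  have "(\<Sum>v\<in>V. chi (l v)) = (\<Sum>v\<in>V. chi (l (u + v)))"
    by (rule sum_translate[OF add_V two_V u(1), symmetric])
  also have "\<dots> = (\<Sum>v\<in>V. - chi (l v))"
    using u by (intro sum.cong) (simp_all add: lin chi_add F2)
  finally show ?thesis by (simp add: sum_negf)
qed

text \<open>Expanding the square and substituting \<open>w = v + z\<close> turns it into
  \<open>\<Sum>z. chi (q z) * (\<Sum>v. chi (B v z))\<close>, and only \<open>z = 0\<close> survives.\<close>
lemma gauss_sum_square:
  fixes V :: "'v::ab_group_add set"
  assumes fin: "finite V" and add_V: "\<And>v w. v \<in> V \<Longrightarrow> w \<in> V \<Longrightarrow> v + w \<in> V"
    and two_V: "\<And>v. v \<in> V \<Longrightarrow> v + v = 0" and zero_V: "0 \<in> V"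
    and q_F2: "\<And>v. v \<in> V \<Longrightarrow> in_F2 (q v)" and q_0: "q 0 = 0"
    and polar: "\<And>v z. v \<in> V \<Longrightarrow> z \<in> V \<Longrightarrow> q (v + z) = q v + q z + B v z"
    and B_lin: "\<And>v w z. v \<in> V \<Longrightarrow> w \<in> V \<Longrightarrow> z \<in> V \<Longrightarrow> B (v + w) z = B v z + B w z"
    and nondeg: "\<And>z. z \<in> V \<Longrightarrow> z \<noteq> 0 \<Longrightarrow> \<exists>v\<in>V. B v z = 1"
  shows "(\<Sum>v\<in>V. chi (q v))\<^sup>2 = real (card V)"
proof -
  have B_q: "B v z = q (v + z) + q v + q z" if "v \<in> V" "z \<in> V" for v z
    using polar[OF that] by (simp add: algebra_simps)
  have B_F2: "in_F2 (B v z)" if "v \<in> V" "z \<in> V" for v z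
    using that by (simp add: B_q q_F2 add_V)
  have inner: "(\<Sum>v\<in>V. chi (B v z)) = (if z = 0 then real (card V) else 0)" if z: "z \<in> V" for z
  proof (cases "z = 0")
    case True
    have "B v 0 = 0" if "v \<in> V" for v using polar[OF that zero_V] q_0 by simp
    thus ?thesis using True by simp
  next
    case False
    obtain u where "u \<in> V" "B u z = 1" using nondeg[OF z False] by blast
    thus ?thesis using False chi_sum_linear[OF add_V two_V, of "\<lambda>v. B v z" u] z B_lin B_F2 by auto
  qed
  have "(\<Sum>v\<in>V. chi (q v))\<^sup>2 = (\<Sum>v\<in>V. \<Sum>z\<in>V. chi (q v) * chi (q (v + z)))"
    unfolding power2_eq_square sum_product
    by (intro sum.cong refl sum_translate[OF add_V two_V, symmetric])
  also have "\<dots> = (\<Sum>v\<in>V. \<Sum>z\<in>V. chi (q z) * chi (B v z))"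
  proof (intro sum.cong refl)
    fix v z assume v: "v \<in> V" and z: "z \<in> V"
    have "chi (q v) * chi (q (v + z)) = chi (q v + q (v + z))"
      by (simp add: chi_add q_F2 add_V v z)
    also have "q v + q (v + z) = q z + B v z" using polar[OF v z] by (simp add: algebra_simps)
    also have "chi \<dots> = chi (q z) * chi (B v z)" by (simp add: chi_add q_F2 B_F2 v z)
    finally show "chi (q v) * chi (q (v + z)) = chi (q z) * chi (B v z)" .
  qed
  also have "\<dots> = (\<Sum>z\<in>V. chi (q z) * (\<Sum>v\<in>V. chi (B v z)))"
    by (subst sum.swap) (simp add: sum_distrib_left)
  also have "\<dots> = (\<Sum>z\<in>V. chi (q z) * (if z = 0 then real (card V) else 0))"
    by (intro sum.cong refl) (simp add: inner)
  also have "\<dots> = real (card V)"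
    using fin zero_V q_0 by (simp add: if_distrib sum.delta cong: if_cong)
  finally show ?thesis .
qed

section \<open>Kerdock quadratic forms\<close>

definition KV :: "nat \<Rightarrow> (K \<times> K) set" where "KV m = GF m \<times> {0, 1}"

definition pairing :: "nat \<Rightarrow> K \<times> K \<Rightarrow> K \<times> K \<Rightarrow> K" where
  "pairing m w v = tr m (fst w * fst v) + snd w * snd v"

definition kerdock_form :: "nat \<Rightarrow> K \<Rightarrow> K \<times> K \<Rightarrow> K" where
  "kerdock_form m s v = e2 m (s * fst v) + snd v * tr m (s * fst v)"

definition kerdock_polar :: "nat \<Rightarrow> K \<Rightarrow> K \<times> K \<Rightarrow> K \<times> K \<Rightarrow> K" where
  "kerdock_polar m s v z = tr m (s * fst v) * tr m (s * fst z) + tr m ((s * fst v) * (s * fst z))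
     + snd v * tr m (s * fst z) + snd z * tr m (s * fst v)"

lemma KV_fst: "v \<in> KV m \<Longrightarrow> fst v \<in> GF m"
  and KV_snd: "v \<in> KV m \<Longrightarrow> in_F2 (snd v)"
  and KV_add: "v \<in> KV m \<Longrightarrow> w \<in> KV m \<Longrightarrow> v + w \<in> KV m"
  and KV_0 [simp]: "0 \<in> KV m"
  by (auto simp: KV_def in_F2_def zero_prod_def)

lemma KV_two: "v + v = (0 :: K \<times> K)"
  by (cases v) (simp add: zero_prod_def)

lemma finite_KV: "m \<ge> 1 \<Longrightarrow> finite (KV m)"
  by (simp add: KV_def finite_GF)

lemma card_KV: "m \<ge> 1 \<Longrightarrow> card (KV m) = 2 ^ Suc m"
  by (simp add: KV_def card_cartesian_product card_GF)

lemma pairing_add_left: "pairing m (w + w') v = pairing m w v + pairing m w' v"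
  and pairing_add_right: "pairing m w (v + z) = pairing m w v + pairing m w z"
  by (simp_all add: pairing_def tr_add algebra_simps)

lemma pairing_F2: "w \<in> KV m \<Longrightarrow> v \<in> KV m \<Longrightarrow> in_F2 (pairing m w v)"
  by (simp add: pairing_def KV_snd KV_fst)

lemma kerdock_form_polar:
  "kerdock_form m s (v + z) = kerdock_form m s v + kerdock_form m s z + kerdock_polar m s v z"
  by (simp add: kerdock_form_def kerdock_polar_def e2_add tr_add algebra_simps)

lemma kerdock_form_F2: "s \<in> GF m \<Longrightarrow> v \<in> KV m \<Longrightarrow> in_F2 (kerdock_form m s v)"
  by (simp add: kerdock_form_def KV_snd KV_fst)

lemma kerdock_form_0 [simp]: "kerdock_form m s 0 = 0"
  by (simp add: kerdock_form_def)

lemma kerdock_polar_add: "kerdock_polar m s (v + w) z = kerdock_polar m s v z + kerdock_polar m s w z"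
  by (simp add: kerdock_polar_def tr_add algebra_simps)

lemma kerdock_polar_sum_trace:
  assumes s: "s \<in> GF m" and x: "x \<in> GF m" and a: "in_F2 a"
    and same_tr: "tr m (s' * x) = tr m (s * x)"
  shows "kerdock_polar m s (y, 0) (x, a) + kerdock_polar m s' (y, 0) (x, a)
           = tr m (y * ((s + s') * (tr m (s * x) + (s + s') * x + a)))"
proof -
  define \<tau> where "\<tau> = tr m (s * x)"
  define u where "u = s + s'"
  have \<tau>: "in_F2 \<tau>" using s x by (simp add: \<tau>_def)
  have uu: "u * (u * z) = s * (s * z) + s' * (s' * z)" for z by (simp add: u_def algebra_simps)
  have "tr m (y * (u * (\<tau> + u * x + a)))
          = \<tau> * tr m (u * y) + tr m ((s * s + s' * s') * x * y) + a * tr m (u * y)"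
    by (simp add: tr_add algebra_simps uu tr_F2_scalar[OF \<tau>, symmetric] tr_F2_scalar[OF a, symmetric])
  also have "\<dots> = kerdock_polar m s (y, 0) (x, a) + kerdock_polar m s' (y, 0) (x, a)"
    by (simp add: kerdock_polar_def same_tr \<tau>_def u_def tr_add algebra_simps)
  finally show ?thesis by (simp add: \<tau>_def u_def)
qed

lemma kerdock_polar_nondegenerate:
  assumes m: "m \<ge> 1" "odd m" and s: "s \<in> GF m" "s' \<in> GF m" "s \<noteq> s'"
    and z: "z \<in> KV m" "z \<noteq> 0"
  shows "\<exists>v\<in>KV m. kerdock_polar m s v z + kerdock_polar m s' v z = 1"
proof -
  obtain x a where za: "z = (x, a)" by fastforce
  have x: "x \<in> GF m" and a: "in_F2 a" using KV_fst[OF z(1)] KV_snd[OF z(1)] za by auto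
  have "in_F2 (tr m (s * x) + tr m (s' * x))" using s x by simp
  then consider (differ) "tr m (s * x) + tr m (s' * x) = 1" | (same) "tr m (s' * x) = tr m (s * x)"
    by (auto simp: in_F2_def K_add_eq_0_iff)
  then show ?thesis
  proof cases
    case differ
    have "kerdock_polar m s (0, 1) z + kerdock_polar m s' (0, 1) z = 1"
      using differ by (simp add: kerdock_polar_def za)
    moreover have "(0, 1) \<in> KV m" by (simp add: KV_def)
    ultimately show ?thesis by blast
  next
    case same
    define u where "u = s + s'"
    define w where "w = u * (tr m (s * x) + u * x + a)"
    have u0: "u \<noteq> 0" using s by (simp add: u_def K_add_eq_0_iff)
    have w_GF: "w \<in> GF m" using s x a by (simp add: w_def u_def GF_if_in_F2)
    have "w \<noteq> 0"
    proof
      assume "w = 0"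
      hence ux: "u * x = tr m (s * x) + a"
        using u0 by (simp add: w_def K_add_eq_0_iff add.assoc)
      have "tr m (u * x) = 0" using same by (simp add: u_def tr_add algebra_simps)
      moreover have "tr m (u * x) = tr m (s * x) + a" using ux tr_F2 s x a m(2) by simp
      ultimately have "tr m (s * x) + a = 0" by simp
      hence "x = 0" using ux u0 by simp
      hence "a = 0" using \<open>tr m (s * x) + a = 0\<close> by simp
      thus False using z(2) za \<open>x = 0\<close> by (simp add: zero_prod_def)
    qed
    then obtain y where y: "y \<in> GF m" "tr m (w * y) = 1" using tr_nondegenerate[OF m(1) w_GF] by blast
    have "kerdock_polar m s (y, 0) z + kerdock_polar m s' (y, 0) z = 1"
      using kerdock_polar_sum_trace[OF s(1) x a same] y za by (simp add: w_def u_def mult.commute)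
    moreover have "(y, 0) \<in> KV m" using y by (simp add: KV_def)
    ultimately show ?thesis by blast
  qed
qed

text \<open>Correlation of two Kerdock sign vectors from different forms: the exponent is a
  quadratic form with nondegenerate polar form, so the Gauss sum has square \<open>|KV m|\<close>.\<close>
lemma kerdock_correlation_cross:
  assumes m: "m \<ge> 1" "odd m" and s: "s \<in> GF m" "s' \<in> GF m" "s \<noteq> s'"
    and l: "l \<in> KV m" "l' \<in> KV m"
  shows "(\<Sum>v\<in>KV m. chi (kerdock_form m s v + pairing m l v) * chi (kerdock_form m s' v + pairing m l' v))\<^sup>2
           = real (card (KV m))"
proof -
  define q where "q v = kerdock_form m s v + kerdock_form m s' v + pairing m l v + pairing m l' v" for v
  have "chi (kerdock_form m s v + pairing m l v) * chi (kerdock_form m s' v + pairing m l' v) = chi (q v)"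
    if "v \<in> KV m" for v
    using that s l by (simp add: chi_add[symmetric] kerdock_form_F2 pairing_F2 q_def algebra_simps)
  hence "(\<Sum>v\<in>KV m. chi (kerdock_form m s v + pairing m l v) * chi (kerdock_form m s' v + pairing m l' v))
           = (\<Sum>v\<in>KV m. chi (q v))" by (rule sum.cong[OF refl])
  also have "(\<Sum>v\<in>KV m. chi (q v))\<^sup>2 = real (card (KV m))"
  proof (rule gauss_sum_square[where B="\<lambda>v z. kerdock_polar m s v z + kerdock_polar m s' v z"])
    show "finite (KV m)" using m(1) by (rule finite_KV)
    show "in_F2 (q v)" if "v \<in> KV m" for v using that s l by (simp add: q_def kerdock_form_F2 pairing_F2)
    show "q 0 = 0" by (simp add: q_def pairing_def)
    show "q (v + z) = q v + q z + (kerdock_polar m s v z + kerdock_polar m s' v z)" for v z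
      by (simp add: q_def kerdock_form_polar pairing_add_right algebra_simps)
    show "kerdock_polar m s (v + w) z + kerdock_polar m s' (v + w) z
            = (kerdock_polar m s v z + kerdock_polar m s' v z) + (kerdock_polar m s w z + kerdock_polar m s' w z)"
      for v w z by (simp add: kerdock_polar_add algebra_simps)
  qed (use kerdock_polar_nondegenerate[OF m s] in \<open>auto simp: KV_add KV_two\<close>)
  finally show ?thesis .
qed

text \<open>Two distinct sign vectors of the same form differ by the character of a nonzero
  linear functional, hence are orthogonal.\<close>
lemma kerdock_correlation_same:
  assumes m: "m \<ge> 1" and s: "s \<in> GF m" and l: "l \<in> KV m" "l' \<in> KV m" "l \<noteq> l'"
  shows "(\<Sum>v\<in>KV m. chi (kerdock_form m s v + pairing m l v) * chi (kerdock_form m s v + pairing m l' v)) = 0"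
proof -
  define w where "w = l + l'"
  have w: "w \<in> KV m" using l by (simp add: w_def KV_add)
  have "w \<noteq> 0" using l(3) by (auto simp: w_def zero_prod_def prod_eq_iff K_add_eq_0_iff)
  have "chi (kerdock_form m s v + pairing m l v) * chi (kerdock_form m s v + pairing m l' v)
          = chi (pairing m w v)" if "v \<in> KV m" for v
  proof -
    have "chi (kerdock_form m s v + pairing m l v) * chi (kerdock_form m s v + pairing m l' v)
            = chi (kerdock_form m s v + pairing m l v + (kerdock_form m s v + pairing m l' v))"
      using that s l by (simp add: chi_add kerdock_form_F2 pairing_F2)
    also have "\<dots> = chi (pairing m w v)" by (simp add: w_def pairing_add_left algebra_simps)
    finally show ?thesis .
  qed
  moreover have "\<exists>u\<in>KV m. pairing m w u = 1"
  proof (cases "fst w = 0")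
    case False
    then obtain y where "y \<in> GF m" "tr m (fst w * y) = 1" using tr_nondegenerate[OF m KV_fst[OF w]] by blast
    thus ?thesis by (intro bexI[of _ "(y, 0)"]) (auto simp: pairing_def KV_def)
  next
    case True
    hence "snd w = 1" using \<open>w \<noteq> 0\<close> KV_snd[OF w] by (cases w) (auto simp: in_F2_def zero_prod_def)
    thus ?thesis using True by (intro bexI[of _ "(0, 1)"]) (auto simp: pairing_def KV_def)
  qed
  then obtain u where "u \<in> KV m" "pairing m w u = 1" by blast
  hence "(\<Sum>v\<in>KV m. chi (pairing m w v)) = 0"
    by (intro chi_sum_linear[where l="pairing m w"]) (auto simp: KV_add KV_two pairing_add_right pairing_F2 w)
  ultimately show ?thesis by (simp cong: sum.cong)
qed

section \<open>Mutually unbiased bases in dimension \<open>2^(m+1)\<close>\<close>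

text \<open>Coordinates are indexed by \<open>KV m\<close>. The label \<open>None\<close> stands for the standard basis, scaled
  to squared norm \<open>|KV m|\<close>, and each label \<open>Some s\<close>, \<open>s \<in> GF m\<close>, for the orthogonal basis of
  \<open>\<pm>1\<close> vectors \<open>v \<mapsto> chi (kerdock_form m s v + pairing m l v)\<close>, \<open>l \<in> KV m\<close>.\<close>
definition mub_labels :: "nat \<Rightarrow> K option set" where
  "mub_labels m = insert None (Some ` GF m)"

definition mub_vec :: "nat \<Rightarrow> K option \<Rightarrow> K \<times> K \<Rightarrow> K \<times> K \<Rightarrow> real" where
  "mub_vec m b l v = (case b of
      None \<Rightarrow> if v = l then sqrt (real (card (KV m))) else 0
    | Some s \<Rightarrow> chi (kerdock_form m s v + pairing m l v))"

lemma card_mub_labels: "m \<ge> 1 \<Longrightarrow> card (mub_labels m) = 2^m + 1"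
  by (simp add: mub_labels_def finite_GF card_GF card_image)

lemma mub_standard_inner:
  assumes "m \<ge> 1" "l \<in> KV m"
  shows "(\<Sum>v\<in>KV m. mub_vec m None l v * f v) = sqrt (real (card (KV m))) * f l"
proof -
  have "mub_vec m None l v * f v = (if v = l then sqrt (real (card (KV m))) * f v else 0)" for v
    by (simp add: mub_vec_def)
  thus ?thesis using assms finite_KV by (simp add: sum.delta)
qed

lemma mub_norm:
  assumes "m \<ge> 1" "b \<in> mub_labels m" "l \<in> KV m"
  shows "(\<Sum>v\<in>KV m. mub_vec m b l v * mub_vec m b l v) = real (card (KV m))"
proof (cases b)
  case None
  thus ?thesis using assms mub_standard_inner[of m l] by (simp add: mub_vec_def)
qed (simp add: mub_vec_def)

lemma mub_orthogonal:
  assumes "m \<ge> 1" "b \<in> mub_labels m" "l \<in> KV m" "l' \<in> KV m" "l \<noteq> l'"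
  shows "(\<Sum>v\<in>KV m. mub_vec m b l v * mub_vec m b l' v) = 0"
proof (cases b)
  case None
  thus ?thesis using assms mub_standard_inner[of m l] by (simp add: mub_vec_def)
next
  case (Some s)
  hence "s \<in> GF m" using assms(2) by (auto simp: mub_labels_def)
  thus ?thesis using kerdock_correlation_same[OF assms(1) _ assms(3-5)] Some by (simp add: mub_vec_def)
qed

lemma mub_unbiased:
  assumes m: "m \<ge> 1" "odd m" and b: "b \<in> mub_labels m" "b' \<in> mub_labels m" "b \<noteq> b'"
    and l: "l \<in> KV m" "l' \<in> KV m"
  shows "\<bar>\<Sum>v\<in>KV m. mub_vec m b l v * mub_vec m b' l' v\<bar> = sqrt (real (card (KV m)))"
proof (cases b)
  case None
  with b obtain s' where "b' = Some s'" by (auto simp: mub_labels_def)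
  thus ?thesis using None mub_standard_inner[OF m(1) l(1)] by (simp add: abs_mult mub_vec_def)
next
  case (Some s)
  show ?thesis
  proof (cases b')
    case None
    have "(\<Sum>v\<in>KV m. mub_vec m b l v * mub_vec m b' l' v)
            = (\<Sum>v\<in>KV m. mub_vec m None l' v * mub_vec m b l v)"
      by (simp add: None mult.commute)
    thus ?thesis using mub_standard_inner[OF m(1) l(2)] \<open>b = Some s\<close>
      by (simp add: abs_mult mub_vec_def)
  next
    case (Some s')
    with \<open>b = Some s\<close> b have s: "s \<in> GF m" "s' \<in> GF m" "s \<noteq> s'" by (auto simp: mub_labels_def)
    have "(\<Sum>v\<in>KV m. mub_vec m b l v * mub_vec m b' l' v)\<^sup>2 = real (card (KV m))"
      using kerdock_correlation_cross[OF m s l] Some \<open>b = Some s\<close> by (simp add: mub_vec_def)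
    thus ?thesis by (metis abs_of_nonneg real_sqrt_abs real_sqrt_ge_zero of_nat_0_le_iff)
  qed
qed

lemma equiangular_lines_from_gram:
  fixes I :: "'i set" and E :: "'e set" and u :: "'e \<Rightarrow> 'i \<Rightarrow> real"
  assumes fin_I: "finite I" and card_I: "card I \<le> CARD('n::finite)" and fin_E: "finite E"
    and norm: "\<And>e. e \<in> E \<Longrightarrow> (\<Sum>x\<in>I. u e x * u e x) = N" and N: "N > 0"
    and angle: "\<And>e e'. e \<in> E \<Longrightarrow> e' \<in> E \<Longrightarrow> e \<noteq> e' \<Longrightarrow> \<bar>\<Sum>x\<in>I. u e x * u e' x\<bar> = C"
    and C: "C < N"
  shows "\<exists>v :: nat \<Rightarrow> real^'n. equiangular_lines v (card E)"
proof -
  obtain \<iota> :: "'i \<Rightarrow> 'n" where inj: "inj_on \<iota> I"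
    using card_le_inj[OF fin_I finite[of "UNIV :: 'n set"]] card_I by auto
  obtain h where h: "bij_betw h {0..<card E} E" using ex_bij_betw_nat_finite[OF fin_E] by blast
  define w :: "'e \<Rightarrow> real^'n" where
    "w e = (\<chi> j. if j \<in> \<iota> ` I then u e (inv_into I \<iota> j) else 0)" for e
  have inner_w: "w e \<bullet> w e' = (\<Sum>x\<in>I. u e x * u e' x)" for e e'
  proof -
    have "w e \<bullet> w e' = (\<Sum>j\<in>\<iota> ` I. u e (inv_into I \<iota> j) * u e' (inv_into I \<iota> j))"
      unfolding inner_vec_def by (rule sum.mono_neutral_cong_right) (auto simp: w_def)
    also have "\<dots> = (\<Sum>x\<in>I. u e x * u e' x)" using inj by (simp add: sum.reindex)
    finally show ?thesis .
  qed
  define v where "v i = (1 / sqrt N) *\<^sub>R w (h i)" for i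
  have inner_v: "v i \<bullet> v j = (\<Sum>x\<in>I. u (h i) x * u (h j) x) / N" for i j
    using N by (simp add: v_def inner_w real_sqrt_mult[symmetric])
  have h_E: "i < card E \<Longrightarrow> h i \<in> E" for i using h by (auto simp: bij_betw_def)
  have h_inj: "i < card E \<Longrightarrow> j < card E \<Longrightarrow> i \<noteq> j \<Longrightarrow> h i \<noteq> h j" for i j
    using h by (auto simp: bij_betw_def inj_on_def)
  have unit: "norm (v i) = 1" if "i < card E" for i
    using inner_v[of i i] norm[OF h_E[OF that]] N by (simp add: norm_eq_sqrt_inner)
  have cos: "\<bar>v i \<bullet> v j\<bar> = C / N" if "i < card E" "j < card E" "i \<noteq> j" for i j
    using inner_v[of i j] angle[OF h_E[OF that(1)] h_E[OF that(2)] h_inj[OF that]] N by simp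
  have distinct: "span {v i} \<noteq> span {v j}" if "i < card E" "j < card E" "i \<noteq> j" for i j
  proof
    assume "span {v i} = span {v j}"
    hence "v i \<in> span {v j}" by (metis span_base singletonI)
    then obtain c where c: "v i = c *\<^sub>R v j" by (auto simp: span_singleton)
    hence "norm (v i) = \<bar>c\<bar> * norm (v j)" by simp
    hence "\<bar>c\<bar> = 1" using unit that by simp
    moreover have "v i \<bullet> v j = c" using c unit[OF that(2)] by (simp add: power2_norm_eq_inner[symmetric])
    ultimately show False using cos[OF that] C N by simp
  qed
  have "equiangular_lines v (card E)"
    unfolding equiangular_lines_def using unit distinct cos by (intro conjI allI impI exI[of _ "C / N"]) auto
  thus ?thesis by blast
qed

lemma equiangular_lines_axes: "\<exists>v :: nat \<Rightarrow> real^'n::finite. equiangular_lines v CARD('n)"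
proof -
  have "\<exists>v :: nat \<Rightarrow> real^'n. equiangular_lines v (card (UNIV :: 'n set))"
  proof (rule equiangular_lines_from_gram[where u="\<lambda>e x. if e = x then 1 else 0" and N=1 and C=0])
    fix e :: 'n
    have "(\<Sum>x\<in>UNIV. (if e = x then 1 else 0) * (if e = x then 1 else 0))
            = (\<Sum>x\<in>UNIV. if e = x then 1 else (0::real))"
      by (rule sum.cong) auto
    thus "(\<Sum>x\<in>UNIV. (if e = x then 1 else 0) * (if e = x then 1 else 0)) = (1::real)"
      by simp
  qed (auto intro!: sum.neutral)
  thus ?thesis by simp
qed

text \<open>Take \<open>g\<close> of the \<open>2\<^sup>m + 1\<close> mutually unbiased bases in dimension \<open>d = 2^(m+1) = 4^(k+1)\<close>
  (\<open>m = 2k + 1\<close>), and extend every vector of the \<open>b\<close>-th basis by \<open>g\<close> new coordinates carrying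
  \<open>sqrt (sqrt d)\<close> in position \<open>b\<close>. The \<open>g d\<close> resulting vectors in dimension \<open>d + g\<close> have squared norm
  \<open>d + sqrt d\<close> and all mutual inner products of absolute value \<open>sqrt d\<close>.\<close>
lemma equiangular_lines_from_mubs:
  fixes k g :: nat
  assumes g: "g \<le> 2 * 4^k + 1" and dim: "4 * 4^k + g \<le> CARD('n::finite)"
  shows "\<exists>v :: nat \<Rightarrow> real^'n. equiangular_lines v (g * (4 * 4^k))"
proof -
  define m where "m = 2 * k + 1"
  have m: "m \<ge> 1" "odd m" by (simp_all add: m_def)
  have pow: "(2::nat) ^ (2 * k) = 4^k" by (simp add: power_mult)
  have card_KV: "card (KV m) = 4 * 4^k" using card_KV[OF m(1)] pow by (simp add: m_def)
  have fin_KV: "finite (KV m)" using finite_KV[OF m(1)] .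
  obtain B where B: "B \<subseteq> mub_labels m" "card B = g" "finite B"
    using obtain_subset_with_card_n[of g "mub_labels m"] g card_mub_labels[OF m(1)] pow
    by (auto simp: m_def)
  define a where "a = sqrt (real (card (KV m)))"
  have a: "a > 0" "a * a = real (card (KV m))" using card_KV by (simp_all add: a_def)
  define u :: "K option \<times> (K \<times> K) \<Rightarrow> (K \<times> K) + K option \<Rightarrow> real" where
    "u e x = (case x of Inl v \<Rightarrow> mub_vec m (fst e) (snd e) v
                     | Inr b \<Rightarrow> if b = fst e then sqrt a else 0)" for e x
  define E where "E = B \<times> KV m"
  have inner: "(\<Sum>x\<in>KV m <+> B. u e x * u e' x)
                 = (\<Sum>v\<in>KV m. mub_vec m (fst e) (snd e) v * mub_vec m (fst e') (snd e') v)
                   + (if fst e = fst e' then a else 0)" if "e \<in> E" for e e'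
  proof -
    have "(\<Sum>b\<in>B. u e (Inr b) * u e' (Inr b)) = (\<Sum>b\<in>B. if b = fst e then (if fst e = fst e' then a else 0) else 0)"
      using a by (intro sum.cong) (auto simp: u_def)
    also have "\<dots> = (if fst e = fst e' then a else 0)" using that B(3) by (auto simp: E_def)
    finally show ?thesis using fin_KV B(3) by (simp add: sum.Plus u_def)
  qed
  have "\<exists>v :: nat \<Rightarrow> real^'n. equiangular_lines v (card E)"
  proof (rule equiangular_lines_from_gram[where u=u and N="a * a + a" and C=a])
    show "finite (KV m <+> B)" "finite E" using fin_KV B(3) by (simp_all add: E_def)
    show "card (KV m <+> B) \<le> CARD('n)" using fin_KV B dim card_KV by (simp add: card_Plus)
    show "(\<Sum>x\<in>KV m <+> B. u e x * u e x) = a * a + a" if "e \<in> E" for e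
      using inner[OF that] mub_norm[OF m(1)] that B(1) a by (auto simp: E_def)
    show "\<bar>\<Sum>x\<in>KV m <+> B. u e x * u e' x\<bar> = a" if "e \<in> E" "e' \<in> E" "e \<noteq> e'" for e e'
    proof (cases "fst e = fst e'")
      case True
      hence "snd e \<noteq> snd e'" using that(3) by (simp add: prod_eq_iff)
      thus ?thesis using inner[OF that(1)] True mub_orthogonal[OF m(1)] that(1,2) B(1) a
        by (auto simp: E_def)
    next
      case False
      have "fst e \<in> mub_labels m" "fst e' \<in> mub_labels m" "snd e \<in> KV m" "snd e' \<in> KV m"
        using that(1,2) B(1) by (auto simp: E_def)
      thus ?thesis using inner[OF that(1), of e'] mub_unbiased[OF m _ _ False] False
        by (simp add: a_def)
    qed
    show "a * a + a > 0" "a < a * a + a" using a(1) by (simp_all add: add_pos_pos)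
  qed
  moreover have "card E = g * (4 * 4^k)" using fin_KV B card_KV by (simp add: E_def card_cartesian_product)
  ultimately show ?thesis by simp
qed

section \<open>Choice of parameters\<close>

lemma power4_range:
  fixes b N :: nat
  assumes "b \<ge> 1" "b < N"
  shows "\<exists>j. b * 4^j < N \<and> N \<le> 4 * (b * 4^j)"
proof -
  have "Suc b \<le> N" using assms(2) by simp
  thus ?thesis
  proof (induction N rule: nat_induct_at_least)
    case base
    show ?case using assms(1) by (intro exI[of _ 0]) auto
  next
    case (Suc N)
    then obtain j where j: "b * 4^j < N" "N \<le> 4 * (b * 4^j)" by blast
    show ?case
    proof (cases "Suc N \<le> 4 * (b * 4^j)")
      case False
      hence "N = 4 * (b * 4^j)" using j by simp
      thus ?thesis using assms(1) by (intro exI[of _ "Suc j"]) auto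
    qed (use j in \<open>auto intro: exI[of _ j]\<close>)
  qed
qed

text \<open>The quadratic estimate for the middle range, where all extra coordinates are used.\<close>
lemma bound_middle_range:
  fixes e x :: int
  assumes "e \<ge> 1" "2 * e + 1 \<le> x" "x \<le> 32 * e + 1"
  shows "8 * (64 * e + x) * (4 * (64 * e + x) + 33) \<le> 1089 * (x * (64 * e))"
proof -
  have "0 \<le> (x - 2 * e - 1) * (32 * e + 1 - x)" "0 \<le> e * (x - 2 * e - 1)" using assms by simp_all
  thus ?thesis using assms by (simp add: algebra_simps)
qed

lemma good_parameters:
  fixes N :: nat
  shows "8 * N * (4 * N + 33) \<le> 1089 * N \<or>
         (\<exists>k g. g \<le> 2 * 4^k + 1 \<and> 4 * 4^k + g \<le> N \<and> 8 * N * (4 * N + 33) \<le> 1089 * (g * (4 * 4^k)))"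
    (is "_ \<or> (\<exists>k g. ?good k g)")
proof -
  consider (small) "N \<le> 25" | (medium) "25 < N" "N \<le> 64" | (large) "64 < N" by linarith
  thus ?thesis
  proof cases
    case small
    hence "N * (8 * (4 * N + 33)) \<le> N * 1089" by (intro mult_le_mono2) simp
    thus ?thesis by (simp add: algebra_simps)
  next
    case medium
    hence "8 * N * (4 * N + 33) \<le> 8 * 64 * (4 * 64 + 33)" by (intro mult_le_mono) auto
    hence "?good 1 9" using medium by simp
    thus ?thesis by blast
  next
    case large
    then obtain j where j: "64 * 4^j < N" "N \<le> 4 * (64 * 4^j)" using power4_range[of 64 N] by auto
    define e :: nat where "e = 4^j"
    have e: "e \<ge> 1" "4^(j + 1) = 4 * e" "4^(j + 2) = 16 * e" by (simp_all add: e_def power_add)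
    define x where "x = N - 64 * e"
    have N: "N = 64 * e + x" "x \<ge> 1" using j by (auto simp: x_def e_def)
    consider "x \<le> 2 * e" | "2 * e + 1 \<le> x" "x \<le> 32 * e + 1" | "32 * e + 2 \<le> x" by linarith
    hence "?good (j + 1) (8 * e + 1) \<or> ?good (j + 2) x \<or> ?good (j + 2) (32 * e + 1)"
    proof cases
      case 1
      have "8 * N * (4 * N + 33) \<le> 8 * (66 * e) * (4 * (66 * e) + 33)"
        using 1 N by (intro mult_le_mono) auto
      also have "\<dots> = 1089 * ((8 * e + 1) * (4 * (4 * e)))" by (simp add: algebra_simps)
      finally show ?thesis using 1 N e by auto
    next
      case 2
      have "int (8 * N * (4 * N + 33)) \<le> int (1089 * (x * (4 * (16 * e))))"
        using bound_middle_range[of "int e" "int x"] e 2 N by simp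
      hence "8 * N * (4 * N + 33) \<le> 1089 * (x * (4 * (16 * e)))" by linarith
      thus ?thesis using 2 N e by auto
    next
      case 3
      have "8 * N * (4 * N + 33) \<le> 8 * (256 * e) * (4 * (256 * e) + 33)"
        using j by (intro mult_le_mono) (auto simp: e_def)
      also have "\<dots> \<le> 1089 * ((32 * e + 1) * (4 * (16 * e)))" by (simp add: algebra_simps)
      finally show ?thesis using 3 N e by auto
    qed
    thus ?thesis by blast
  qed
qed

theorem corollary2:
  shows "\<exists>(v :: nat \<Rightarrow> real ^ 'n) r.
           equiangular_lines v r \<and>
           real r \<ge> 8 / 1089 * real CARD('n) * (4 * real CARD('n) + 33)"
proof -
  define N where "N = CARD('n)"
  have "\<exists>(v :: nat \<Rightarrow> real ^ 'n) r. equiangular_lines v r \<and> 8 * N * (4 * N + 33) \<le> 1089 * r"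
    using good_parameters[of N]
  proof
    assume "8 * N * (4 * N + 33) \<le> 1089 * N"
    thus ?thesis using equiangular_lines_axes N_def by blast
  next
    assume "\<exists>k g. g \<le> 2 * 4^k + 1 \<and> 4 * 4^k + g \<le> N \<and> 8 * N * (4 * N + 33) \<le> 1089 * (g * (4 * 4^k))"
    thus ?thesis using equiangular_lines_from_mubs N_def by blast
  qed
  then obtain v :: "nat \<Rightarrow> real ^ 'n" and r
    where "equiangular_lines v r" and bound: "8 * N * (4 * N + 33) \<le> 1089 * r" by blast
  moreover have "8 * real N * (4 * real N + 33) \<le> 1089 * real r"
    using bound by (metis (mono_tags) of_nat_le_iff of_nat_mult of_nat_add of_nat_numeral)
  ultimately show ?thesis unfolding N_def by (intro exI[of _ v] exI[of _ r]) simp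
qed

end
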